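(* Let $A$ be a general metric space, let $(x_n)$ and $(y_n)$ be weakly flat sequences in $A$ and let $\mathcal F$ be a flat filter on $A$ with $(x_n)\to\mathcal F$ and $(y_n)\to\mathcal F$. Then there exists a forward Cauchy sequence $(z_n)$ in $A$ such that $(x_n)\to(z_n)$, $(y_n)\to(z_n)$ and $(z_n)\to\mathcal F$.
   Context: A general metric space $A$ is a set with $A(-,-):A\times A\to[0,\infty]$, $A(x,x)=0$, $A(x,z)\le A(x,y)+A(y,z)$. A filter on $A$ is a nonempty set of nonempty subsets closed under finite intersections and supersets. $\mathcal F$ is weakly flat iff for every $\epsilon>0$ there is $f\in\mathcal F$ such that for all $x\in f$ and all $g\in\mathcal F$ there is $y\in g$ with $A(x,y)\le\epsilon$; flat iff for every $\epsilon>0$ there is $f\in\mathcal F$ such that for every finite family $x_1,\dots,x_n\in f$ and every $g\in\mathcal F$ there is $y\in g$ with $A(x_i,y)\le\epsilon$ for all $i$. For weakly flat filters, $\mathcal F_1\to\mathcal F_2$ iff for every $\epsilon>0$ there is $f\in\mathcal F_1$ such that for every $x\in f$ and every $g\in\mathcal F_2$ there is $y\in g$ with $A(x,y)\le\epsilon$. A sequence is identified with its filter, generated by the tails $\{x_p:p\ge n\}$; a sequence is weakly flat if its filter is. $(z_n)$ is forward Cauchy iff for every $\epsilon>0$ there is $N$ with $A(z_n,z_m)\le\epsilon$ whenever $m\ge n\ge N$. *)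

theory Defs
  imports "HOL-Analysis.Analysis" "HOL-Library.Extended_Nonnegative_Real"
begin

definition gen_metric :: "('a \<Rightarrow> 'a \<Rightarrow> ennreal) \<Rightarrow> bool" where
  "gen_metric d \<longleftrightarrow> (\<forall>x. d x x = 0) \<and> (\<forall>x y z. d x z \<le> d x y + d y z)"

definition is_filter :: "'a set set \<Rightarrow> bool" where
  "is_filter F \<longleftrightarrow> F \<noteq> {} \<and> (\<forall>f\<in>F. f \<noteq> {})
     \<and> (\<forall>f\<in>F. \<forall>g\<in>F. f \<inter> g \<in> F)
     \<and> (\<forall>f\<in>F. \<forall>g. f \<subseteq> g \<longrightarrow> g \<in> F)"

definition weakly_flat :: "('a \<Rightarrow> 'a \<Rightarrow> ennreal) \<Rightarrow> 'a set set \<Rightarrow> bool" where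
  "weakly_flat d F \<longleftrightarrow> (\<forall>\<epsilon>::real. \<epsilon> > 0 \<longrightarrow>
     (\<exists>f\<in>F. \<forall>x\<in>f. \<forall>g\<in>F. \<exists>y\<in>g. d x y \<le> ennreal \<epsilon>))"

definition flat :: "('a \<Rightarrow> 'a \<Rightarrow> ennreal) \<Rightarrow> 'a set set \<Rightarrow> bool" where
  "flat d F \<longleftrightarrow> (\<forall>\<epsilon>::real. \<epsilon> > 0 \<longrightarrow>
     (\<exists>f\<in>F. \<forall>S. finite S \<and> S \<subseteq> f \<longrightarrow>
        (\<forall>g\<in>F. \<exists>y\<in>g. \<forall>x\<in>S. d x y \<le> ennreal \<epsilon>)))"

definition fconv :: "('a \<Rightarrow> 'a \<Rightarrow> ennreal) \<Rightarrow> 'a set set \<Rightarrow> 'a set set \<Rightarrow> bool" where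
  "fconv d F1 F2 \<longleftrightarrow> (\<forall>\<epsilon>::real. \<epsilon> > 0 \<longrightarrow>
     (\<exists>f\<in>F1. \<forall>x\<in>f. \<forall>g\<in>F2. \<exists>y\<in>g. d x y \<le> ennreal \<epsilon>))"

definition seq_filter :: "(nat \<Rightarrow> 'a) \<Rightarrow> 'a set set" where
  "seq_filter x = {g. \<exists>n. {x p | p. p \<ge> n} \<subseteq> g}"

definition forward_cauchy :: "('a \<Rightarrow> 'a \<Rightarrow> ennreal) \<Rightarrow> (nat \<Rightarrow> 'a) \<Rightarrow> bool" where
  "forward_cauchy d z \<longleftrightarrow> (\<forall>\<epsilon>::real. \<epsilon> > 0 \<longrightarrow>
     (\<exists>N. \<forall>n m. N \<le> n \<and> n \<le> m \<longrightarrow> d (z n) (z m) \<le> ennreal \<epsilon>))"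

end

theory Submission
  imports Defs
begin

text \<open>Fix sets \<open>f\<^sub>m \<in> F\<close> witnessing flatness at scale \<open>2^-m\<close> and enumerate the
  (countably many) terms of \<open>x\<close> and \<open>y\<close> as \<open>u\<^sub>0, u\<^sub>1, \<dots>\<close>. Whenever \<open>u\<^sub>j\<close> is
  \<open>2^-k\<close>-close to \<open>F\<close>, some point of \<open>f\<^sub>m\<close> is \<open>2^-k\<close>-close to \<open>u\<^sub>j\<close>. Flatness of \<open>f\<^sub>m\<close>
  then yields a single \<open>z\<^sub>m\<^sub>+\<^sub>1 \<in> f\<^sub>m\<^sub>+\<^sub>1\<close> within \<open>2^-m\<close> of \<open>z\<^sub>m \<in> f\<^sub>m\<close> and of the
  finitely many such points for \<open>j, k \<le> m\<close>. The steps of \<open>z\<close> are summable, so \<open>z\<close> is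
  forward Cauchy; \<open>z\<^sub>m \<in> f\<^sub>m\<close> gives \<open>z \<rightarrow> F\<close>; and \<open>u\<^sub>j\<close> stays within \<open>2^-k + 2^-m\<close> of
  \<open>z\<^sub>m\<^sub>+\<^sub>1\<close> for all large \<open>m\<close>, which turns \<open>x \<rightarrow> F\<close> into \<open>x \<rightarrow> z\<close>, and likewise for \<open>y\<close>.\<close>

definition near :: "('a \<Rightarrow> 'a \<Rightarrow> ennreal) \<Rightarrow> 'a set set \<Rightarrow> real \<Rightarrow> 'a \<Rightarrow> bool" where
  "near d F \<epsilon> u \<longleftrightarrow> (\<forall>g\<in>F. \<exists>a\<in>g. d u a \<le> ennreal \<epsilon>)"

definition flat_set :: "('a \<Rightarrow> 'a \<Rightarrow> ennreal) \<Rightarrow> 'a set set \<Rightarrow> real \<Rightarrow> 'a set \<Rightarrow> bool" where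
  "flat_set d F \<epsilon> f \<longleftrightarrow> f \<in> F \<and>
     (\<forall>S. finite S \<and> S \<subseteq> f \<longrightarrow> (\<forall>g\<in>F. \<exists>q\<in>g. \<forall>s\<in>S. d s q \<le> ennreal \<epsilon>))"

lemma fconv_iff_near: "fconv d F1 F2 \<longleftrightarrow> (\<forall>\<epsilon>>0. \<exists>f\<in>F1. \<forall>u\<in>f. near d F2 \<epsilon> u)"
  by (simp add: fconv_def near_def)

lemma flat_iff_flat_set: "flat d F \<longleftrightarrow> (\<forall>\<epsilon>>0. \<exists>f. flat_set d F \<epsilon> f)"
  unfolding flat_def flat_set_def by blast

lemma near_mono: "near d F \<epsilon> u \<Longrightarrow> \<epsilon> \<le> \<epsilon>' \<Longrightarrow> near d F \<epsilon>' u"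
  unfolding near_def by (meson ennreal_leI order_trans)

lemma flat_set_near: "flat_set d F \<epsilon> f \<Longrightarrow> u \<in> f \<Longrightarrow> near d F \<epsilon> u"
  unfolding flat_set_def near_def by (metis empty_subsetI finite.simps insert_subset singletonI)

lemma flat_set_nonempty: "flat_set d F \<epsilon> f \<Longrightarrow> f \<noteq> {}"
  unfolding flat_set_def by (metis empty_iff empty_subsetI finite.emptyI)

lemma gen_metric_self: "gen_metric d \<Longrightarrow> d u u = 0"
  by (simp add: gen_metric_def)

lemma gen_metric_triangle: "gen_metric d \<Longrightarrow> d u w \<le> d u v + d v w"
  by (simp add: gen_metric_def)

lemma seq_filter_tail: "{w p | p. p \<ge> N} \<in> seq_filter w"
  by (auto simp: seq_filter_def)

lemma seq_filter_eventually: "g \<in> seq_filter w \<Longrightarrow> \<exists>N. \<forall>p\<ge>N. w p \<in> g"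
  by (auto simp: seq_filter_def)

lemma fconv_seq_filter_iff:
  "fconv d (seq_filter w) G \<longleftrightarrow> (\<forall>\<epsilon>>0. \<exists>N. \<forall>n\<ge>N. near d G \<epsilon> (w n))"
proof (intro iffI allI impI)
  fix \<epsilon> :: real assume "fconv d (seq_filter w) G" "\<epsilon> > 0"
  then obtain f where "f \<in> seq_filter w" "\<forall>u\<in>f. near d G \<epsilon> u"
    unfolding fconv_iff_near by blast
  then show "\<exists>N. \<forall>n\<ge>N. near d G \<epsilon> (w n)" using seq_filter_eventually by blast
next
  assume tail_near: "\<forall>\<epsilon>>0. \<exists>N. \<forall>n\<ge>N. near d G \<epsilon> (w n)"
  show "fconv d (seq_filter w) G"
    unfolding fconv_iff_near
  proof (intro allI impI)
    fix \<epsilon> :: real assume "\<epsilon> > 0"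
    then obtain N where "\<forall>n\<ge>N. near d G \<epsilon> (w n)" using tail_near by blast
    then have "\<forall>u\<in>{w p | p. p \<ge> N}. near d G \<epsilon> u" by blast
    then show "\<exists>f\<in>seq_filter w. \<forall>u\<in>f. near d G \<epsilon> u" using seq_filter_tail by blast
  qed
qed

lemma near_seq_filter_iff:
  "near d (seq_filter z) \<epsilon> u \<longleftrightarrow> (\<forall>M. \<exists>m\<ge>M. d u (z m) \<le> ennreal \<epsilon>)"
proof (intro iffI allI)
  fix M assume "near d (seq_filter z) \<epsilon> u"
  then obtain a where "a \<in> {z p | p. p \<ge> M}" "d u a \<le> ennreal \<epsilon>"
    unfolding near_def using seq_filter_tail by blast
  then show "\<exists>m\<ge>M. d u (z m) \<le> ennreal \<epsilon>" by blast
next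
  assume close: "\<forall>M. \<exists>m\<ge>M. d u (z m) \<le> ennreal \<epsilon>"
  show "near d (seq_filter z) \<epsilon> u"
    unfolding near_def
  proof
    fix g assume "g \<in> seq_filter z"
    then obtain N where "\<forall>p\<ge>N. z p \<in> g" using seq_filter_eventually by blast
    then show "\<exists>a\<in>g. d u a \<le> ennreal \<epsilon>" using close by blast
  qed
qed

lemma forward_cauchy_if_summable_steps:
  fixes r :: "nat \<Rightarrow> real"
  assumes d: "gen_metric d" and r: "summable r" "\<And>m. 0 \<le> r m"
    and steps: "\<And>m. d (z m) (z (Suc m)) \<le> ennreal (r m)"
  shows "forward_cauchy d z"
  unfolding forward_cauchy_def
proof (intro allI impI)
  fix \<epsilon> :: real assume "\<epsilon> > 0"
  then obtain N where N: "\<And>n. n \<ge> N \<Longrightarrow> norm (\<Sum>i. r (i + n)) < \<epsilon>"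
    using suminf_exist_split r(1) by blast
  have partial: "d (z n) (z (n + j)) \<le> ennreal (\<Sum>i<j. r (i + n))" for n j
  proof (induction j)
    case 0
    then show ?case using gen_metric_self[OF d] by simp
  next
    case (Suc j)
    have "d (z n) (z (n + Suc j)) \<le> d (z n) (z (n + j)) + d (z (n + j)) (z (Suc (n + j)))"
      using gen_metric_triangle[OF d] by simp
    also have "\<dots> \<le> ennreal (\<Sum>i<j. r (i + n)) + ennreal (r (j + n))"
      using Suc steps by (intro add_mono) (auto simp: add.commute)
    also have "\<dots> = ennreal (\<Sum>i<Suc j. r (i + n))"
      using r(2) by (simp add: sum_nonneg)
    finally show ?case .
  qed
  have "d (z n) (z m) \<le> ennreal \<epsilon>" if "N \<le> n" "n \<le> m" for n m
  proof -
    obtain j where m: "m = n + j" using \<open>n \<le> m\<close> le_Suc_ex by blast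
    have "(\<Sum>i<j. r (i + n)) \<le> (\<Sum>i. r (i + n))"
      using r by (intro sum_le_suminf summable_ignore_initial_segment) auto
    also have "\<dots> < \<epsilon>" using N[OF \<open>N \<le> n\<close>] by simp
    finally show ?thesis using partial[of n j] m by (simp add: ennreal_leI order_trans)
  qed
  then show "\<exists>N. \<forall>n m. N \<le> n \<and> n \<le> m \<longrightarrow> d (z n) (z m) \<le> ennreal \<epsilon>" by blast
qed

lemma flat_set_step:
  assumes d: "gen_metric d" and f: "flat_set d F \<epsilon> f" and "g \<in> F" "p \<in> f"
    and T: "finite T" "\<forall>(v, \<delta>)\<in>T. near d F \<delta> v"
  shows "\<exists>q\<in>g. d p q \<le> ennreal \<epsilon> \<and> (\<forall>(v, \<delta>)\<in>T. d v q \<le> ennreal \<delta> + ennreal \<epsilon>)"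
proof -
  have "\<forall>t\<in>T. \<exists>a\<in>f. d (fst t) a \<le> ennreal (snd t)"
    using T(2) f by (auto simp: near_def flat_set_def)
  then obtain a where a: "\<And>t. t \<in> T \<Longrightarrow> a t \<in> f \<and> d (fst t) (a t) \<le> ennreal (snd t)"
    by metis
  have "finite (insert p (a ` T))" "insert p (a ` T) \<subseteq> f"
    using T(1) a \<open>p \<in> f\<close> by auto
  then obtain q where q: "q \<in> g" "\<And>s. s \<in> insert p (a ` T) \<Longrightarrow> d s q \<le> ennreal \<epsilon>"
    using f \<open>g \<in> F\<close> unfolding flat_set_def by meson
  have "d v q \<le> ennreal \<delta> + ennreal \<epsilon>" if "(v, \<delta>) \<in> T" for v \<delta>
  proof -
    have "d v q \<le> d v (a (v, \<delta>)) + d (a (v, \<delta>)) q" by (rule gen_metric_triangle[OF d])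
    also have "\<dots> \<le> ennreal \<delta> + ennreal \<epsilon>"
      using a[OF that] q(2)[of "a (v, \<delta>)"] that by (intro add_mono) auto
    finally show ?thesis .
  qed
  then show ?thesis using q by blast
qed

lemma flat_filter_tracking_sequence:
  fixes e :: "nat \<Rightarrow> real" and u :: "nat \<Rightarrow> 'a"
  assumes d: "gen_metric d" and F: "flat d F" and e: "\<And>m. e m > 0"
  obtains z where "\<And>m. d (z m) (z (Suc m)) \<le> ennreal (e m)"
    and "\<And>m. near d F (e m) (z m)"
    and "\<And>j k m. j \<le> m \<Longrightarrow> k \<le> m \<Longrightarrow> near d F (e k) (u j) \<Longrightarrow>
           d (u j) (z (Suc m)) \<le> ennreal (e k) + ennreal (e m)"
proof -
  have "\<forall>m. \<exists>f. flat_set d F (e m) f" using F e unfolding flat_iff_flat_set by blast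
  then obtain f where f: "\<And>m. flat_set d F (e m) (f m)" by metis
  define T where "T m = {(u j, e k) | j k. j \<le> m \<and> k \<le> m \<and> near d F (e k) (u j)}" for m
  have T: "finite (T m)" "\<forall>(v, \<delta>)\<in>T m. near d F \<delta> v" for m
  proof -
    have "T m \<subseteq> (\<lambda>(j, k). (u j, e k)) ` ({..m} \<times> {..m})" by (auto simp: T_def)
    then show "finite (T m)" by (rule finite_subset) simp
    show "\<forall>(v, \<delta>)\<in>T m. near d F \<delta> v" by (auto simp: T_def)
  qed
  have "\<exists>z. \<forall>m. z m \<in> f m \<and> d (z m) (z (Suc m)) \<le> ennreal (e m) \<and>
             (\<forall>(v, \<delta>)\<in>T m. d v (z (Suc m)) \<le> ennreal \<delta> + ennreal (e m))"
  proof (rule dependent_nat_choice)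
    show "\<exists>p. p \<in> f 0" using flat_set_nonempty[OF f] by blast
    fix p m assume "p \<in> f m"
    then show "\<exists>q. q \<in> f (Suc m) \<and> d p q \<le> ennreal (e m) \<and>
                 (\<forall>(v, \<delta>)\<in>T m. d v q \<le> ennreal \<delta> + ennreal (e m))"
      using flat_set_step[OF d f[of m] _ _ T] f[of "Suc m"] by (meson flat_set_def)
  qed
  then obtain z where z: "\<And>m. z m \<in> f m" "\<And>m. d (z m) (z (Suc m)) \<le> ennreal (e m)"
    "\<And>m. \<forall>(v, \<delta>)\<in>T m. d v (z (Suc m)) \<le> ennreal \<delta> + ennreal (e m)"
    by blast
  show thesis
  proof (rule that)
    show "d (z m) (z (Suc m)) \<le> ennreal (e m)" for m by (rule z(2))
    show "near d F (e m) (z m)" for m using flat_set_near[OF f z(1)] .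
    show "d (u j) (z (Suc m)) \<le> ennreal (e k) + ennreal (e m)"
      if "j \<le> m" "k \<le> m" "near d F (e k) (u j)" for j k m
      using z(3)[of m] that by (auto simp: T_def)
  qed
qed

lemma fconv_seq_filter_if_near_null:
  fixes e :: "nat \<Rightarrow> real"
  assumes "e \<longlonglongrightarrow> 0" and "\<And>m. near d F (e m) (z m)"
  shows "fconv d (seq_filter z) F"
  unfolding fconv_seq_filter_iff
proof (intro allI impI)
  fix \<epsilon> :: real assume "\<epsilon> > 0"
  then obtain N where "\<And>n. n \<ge> N \<Longrightarrow> e n < \<epsilon>"
    using order_tendstoD(2)[OF assms(1)] by (auto simp: eventually_sequentially)
  then show "\<exists>N. \<forall>n\<ge>N. near d F \<epsilon> (z n)"
    using assms(2) near_mono by (metis less_imp_le)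
qed

lemma fconv_seq_filter_if_tracked:
  fixes e :: "nat \<Rightarrow> real"
  assumes e: "e \<longlonglongrightarrow> 0" "\<And>m. e m > 0"
    and w: "fconv d (seq_filter w) F" "range w \<subseteq> range u"
    and tracked: "\<And>j k m. j \<le> m \<Longrightarrow> k \<le> m \<Longrightarrow> near d F (e k) (u j) \<Longrightarrow>
                    d (u j) (z (Suc m)) \<le> ennreal (e k) + ennreal (e m)"
  shows "fconv d (seq_filter w) (seq_filter z)"
  unfolding fconv_seq_filter_iff
proof (intro allI impI)
  fix \<epsilon> :: real assume "\<epsilon> > 0"
  then obtain K where K: "\<And>n. n \<ge> K \<Longrightarrow> e n < \<epsilon> / 2"
    using order_tendstoD(2)[OF e(1), of "\<epsilon> / 2"] by (auto simp: eventually_sequentially)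
  obtain N where N: "\<And>n. n \<ge> N \<Longrightarrow> near d F (e K) (w n)"
    using w(1) e(2)[of K] unfolding fconv_seq_filter_iff by blast
  have "near d (seq_filter z) \<epsilon> (w n)" if "n \<ge> N" for n
    unfolding near_seq_filter_iff
  proof
    fix M
    obtain j where j: "w n = u j" using w(2) by (metis range_subsetD rangeE)
    define m where "m = max (max j K) M"
    have "d (w n) (z (Suc m)) \<le> ennreal (e K) + ennreal (e m)"
      using tracked[of j m K] N[OF that] j by (simp add: m_def)
    also have "\<dots> = ennreal (e K + e m)"
      using e(2) by (simp add: less_imp_le)
    also have "\<dots> \<le> ennreal \<epsilon>"
      using K[of K] K[of m] by (intro ennreal_leI) (simp add: m_def max.coboundedI1)
    finally show "\<exists>m'\<ge>M. d (w n) (z m') \<le> ennreal \<epsilon>"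
      by (intro exI[of _ "Suc m"]) (simp add: m_def)
  qed
  then show "\<exists>N. \<forall>n\<ge>N. near d (seq_filter z) \<epsilon> (w n)" by blast
qed

theorem flat_filter_common_cauchy_limit:
  assumes d: "gen_metric d" and F: "flat d F" and C: "countable C"
  obtains z where "forward_cauchy d z" and "fconv d (seq_filter z) F"
    and "\<And>w. range w \<subseteq> C \<Longrightarrow> fconv d (seq_filter w) F \<Longrightarrow> fconv d (seq_filter w) (seq_filter z)"
proof -
  define e :: "nat \<Rightarrow> real" where "e = (\<lambda>m. (1 / 2) ^ m)"
  have e: "\<And>m. e m > 0" "summable e" "e \<longlonglongrightarrow> 0"
    by (simp_all add: e_def summable_geometric LIMSEQ_realpow_zero)
  obtain z where z: "\<And>m. d (z m) (z (Suc m)) \<le> ennreal (e m)" "\<And>m. near d F (e m) (z m)"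
    "\<And>j k m. j \<le> m \<Longrightarrow> k \<le> m \<Longrightarrow> near d F (e k) (from_nat_into C j) \<Longrightarrow>
       d (from_nat_into C j) (z (Suc m)) \<le> ennreal (e k) + ennreal (e m)"
    using flat_filter_tracking_sequence[OF d F, of e] e(1) by blast
  show thesis
  proof (rule that)
    show "forward_cauchy d z"
      using forward_cauchy_if_summable_steps[OF d e(2) _ z(1)] e(1) less_imp_le by blast
    show "fconv d (seq_filter z) F" using fconv_seq_filter_if_near_null[OF e(3) z(2)] .
    fix w assume w: "range w \<subseteq> C" "fconv d (seq_filter w) F"
    then have "C \<noteq> {}" by auto
    with w(1) C have "range w \<subseteq> range (from_nat_into C)" by simp
    with w(2) show "fconv d (seq_filter w) (seq_filter z)"
      using fconv_seq_filter_if_tracked[OF e(3,1)] z(3) by blast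
  qed
qed

theorem mainTheorem14:
  fixes d :: "'a \<Rightarrow> 'a \<Rightarrow> ennreal"
    and x y :: "nat \<Rightarrow> 'a"
    and F :: "'a set set"
  assumes "gen_metric d"
    and "weakly_flat d (seq_filter x)"
    and "weakly_flat d (seq_filter y)"
    and "is_filter F"
    and "flat d F"
    and "fconv d (seq_filter x) F"
    and "fconv d (seq_filter y) F"
  shows "\<exists>z :: nat \<Rightarrow> 'a. forward_cauchy d z
           \<and> fconv d (seq_filter x) (seq_filter z)
           \<and> fconv d (seq_filter y) (seq_filter z)
           \<and> fconv d (seq_filter z) F"
proof -
  have "countable (range x \<union> range y)" by simp
  then obtain z where "forward_cauchy d z" "fconv d (seq_filter z) F"
    and tracks: "\<And>w. range w \<subseteq> range x \<union> range y \<Longrightarrow> fconv d (seq_filter w) F \<Longrightarrow>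
       fconv d (seq_filter w) (seq_filter z)"
    by (rule flat_filter_common_cauchy_limit[OF assms(1,5)]) (rule that)
  moreover have "fconv d (seq_filter x) (seq_filter z)" using tracks[of x] assms(6) by simp
  moreover have "fconv d (seq_filter y) (seq_filter z)" using tracks[of y] assms(7) by simp
  ultimately show ?thesis by blast
qed

end
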